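(* Let $F$ be an indexed group with degree map $\deg: F\to\mathbb{Z}$, let $\varphi: F\to G$ be a homomorphism to a group $G$, let $f_1\in F$ have degree one, and let $g\in G$. Then: 1) there exists a homomorphism $\psi: F\to G$ with $\psi(f)=\varphi(f)$ for all $f$ of degree zero and $\psi(f_1)=\varphi(f_1)g$ if and only if $g$ lies in the centraliser $C(\varphi(\ker\deg))$; and such $\psi$, when it exists, is unique; 2) if $H$ is a subgroup of $G$ and $g\in H_\varphi$, then (the homomorphism $\psi$ from 1) exists and) $\psi(f)H=\varphi(f)H$ for all $f\in F$.
   Context: An indexed group is a group $F$ equipped with a surjective homomorphism $\deg: F\to\mathbb{Z}$. For $x,y$ in a group, $x^y=y^{-1}xy$ and $H^y=y^{-1}Hy$; $C(X)$ is the centraliser of $X$. For a subgroup $H\le G$, the $\varphi$-core of $H$ is $H_\varphi=\bigcap_{f\in F}H^{\varphi(f)}\cap C(\{\varphi(f)\mid\deg f=0\})$. *)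

theory Defs
  imports "HOL-Algebra.Algebra"
begin

definition centraliser :: "('a, 'b) monoid_scheme \<Rightarrow> 'a set \<Rightarrow> 'a set" where
  "centraliser G S = {c \<in> carrier G. \<forall>x\<in>S. monoid.mult G c x = monoid.mult G x c}"

definition conj_subgroup :: "('a, 'b) monoid_scheme \<Rightarrow> 'a set \<Rightarrow> 'a \<Rightarrow> 'a set" where
  "conj_subgroup G H y = {monoid.mult G (monoid.mult G (m_inv G y) h) y | h. h \<in> H}"

definition indexed_group :: "('c, 'd) monoid_scheme \<Rightarrow> ('c \<Rightarrow> int) \<Rightarrow> bool" where
  "indexed_group F dg \<longleftrightarrow> group F \<and> dg \<in> hom F integer_group \<and> dg ` carrier F = UNIV"

definition phi_core ::
  "('c, 'd) monoid_scheme \<Rightarrow> ('c \<Rightarrow> int) \<Rightarrow> ('a, 'b) monoid_scheme \<Rightarrow> ('c \<Rightarrow> 'a) \<Rightarrow> 'a set \<Rightarrow> 'a set" where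
  "phi_core F dg G \<phi> H =
     (\<Inter>f\<in>carrier F. conj_subgroup G H (\<phi> f))
     \<inter> centraliser G {\<phi> f | f. f \<in> carrier F \<and> dg f = 0}"

end

theory Submission
  imports Defs
begin

(*
  Every f in F is k f1^n with n = deg f and k of degree zero, so the kernel K of deg and f1
  generate F; this gives uniqueness. The prescribed psi must be psi (k f1^n) = phi k a^n with
  a = phi f1 g, and this is a homomorphism iff conjugation by a^n agrees with conjugation by
  (phi f1)^n on phi K, which for n = 1 says exactly that g centralises phi K.
  For the cosets, f |-> (phi f)^-1 psi f is a crossed homomorphism; hence the f it sends into
  the phi F-invariant core of H form a subgroup, which contains K and, when g is in H_phi, f1.
*)

lemma (in group) inv_mult_cancel_left [simp]:
  "x \<in> carrier G \<Longrightarrow> y \<in> carrier G \<Longrightarrow> inv x \<otimes> (x \<otimes> y) = y"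
  by (simp add: m_assoc [symmetric])

lemma (in group) mult_inv_cancel_left [simp]:
  "x \<in> carrier G \<Longrightarrow> y \<in> carrier G \<Longrightarrow> x \<otimes> (inv x \<otimes> y) = y"
  by (simp add: m_assoc [symmetric])

lemma (in group) conj_mult_eq_conj_iff_commute:
  assumes b: "b \<in> carrier G" and g: "g \<in> carrier G" and x: "x \<in> carrier G"
  shows "(b \<otimes> g) \<otimes> x \<otimes> inv (b \<otimes> g) = b \<otimes> x \<otimes> inv b \<longleftrightarrow> g \<otimes> x = x \<otimes> g"
proof -
  have "(b \<otimes> g) \<otimes> x \<otimes> inv (b \<otimes> g) = b \<otimes> (g \<otimes> x \<otimes> inv g) \<otimes> inv b"
    using b g x by (simp add: m_assoc inv_mult_group)
  then have "(b \<otimes> g) \<otimes> x \<otimes> inv (b \<otimes> g) = b \<otimes> x \<otimes> inv b \<longleftrightarrow> g \<otimes> x \<otimes> inv g = x"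
    using b g x by simp
  also have "\<dots> \<longleftrightarrow> g \<otimes> x = x \<otimes> g"
    using g x by (metis inv_solve_right m_closed)
  finally show ?thesis .
qed

lemma (in group) conj_nat_pow_eq:
  assumes S: "S \<subseteq> carrier G" and c: "c \<in> carrier G" and d: "d \<in> carrier G"
    and agree: "\<And>x. x \<in> S \<Longrightarrow> c \<otimes> x \<otimes> inv c = d \<otimes> x \<otimes> inv d"
    and stable: "\<And>x. x \<in> S \<Longrightarrow> d \<otimes> x \<otimes> inv d \<in> S"
    and x: "x \<in> S"
  shows "c [^] (n::nat) \<otimes> x \<otimes> inv (c [^] n) = d [^] n \<otimes> x \<otimes> inv (d [^] n)"
  using x
proof (induction n arbitrary: x)
  case 0
  then show ?case using S by auto
next
  case (Suc n)
  have xc: "x \<in> carrier G" using Suc.prems S by auto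
  have "c [^] Suc n \<otimes> x \<otimes> inv (c [^] Suc n) = c [^] n \<otimes> (c \<otimes> x \<otimes> inv c) \<otimes> inv (c [^] n)"
    using c xc by (simp add: m_assoc inv_mult_group)
  also have "\<dots> = c [^] n \<otimes> (d \<otimes> x \<otimes> inv d) \<otimes> inv (c [^] n)"
    using agree Suc.prems by simp
  also have "\<dots> = d [^] n \<otimes> (d \<otimes> x \<otimes> inv d) \<otimes> inv (d [^] n)"
    using Suc.IH stable Suc.prems by blast
  also have "\<dots> = d [^] Suc n \<otimes> x \<otimes> inv (d [^] Suc n)"
    using d xc by (simp add: m_assoc inv_mult_group)
  finally show ?case .
qed

lemma (in group) conj_int_pow_eq:
  assumes S: "S \<subseteq> carrier G" and c: "c \<in> carrier G" and d: "d \<in> carrier G"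
    and agree: "\<And>x. x \<in> S \<Longrightarrow> c \<otimes> x \<otimes> inv c = d \<otimes> x \<otimes> inv d"
    and stable: "\<And>x. x \<in> S \<Longrightarrow> d \<otimes> x \<otimes> inv d \<in> S"
    and stable_inv: "\<And>x. x \<in> S \<Longrightarrow> inv d \<otimes> x \<otimes> d \<in> S"
    and x: "x \<in> S"
  shows "c [^] (n::int) \<otimes> x \<otimes> inv (c [^] n) = d [^] n \<otimes> x \<otimes> inv (d [^] n)"
proof (cases "n \<ge> 0")
  case True
  then show ?thesis
    using conj_nat_pow_eq[OF S c d agree stable x, of "nat n"] by (simp add: pow_nat)
next
  case False
  have agree_inv: "inv c \<otimes> y \<otimes> inv (inv c) = inv d \<otimes> y \<otimes> inv (inv d)" if y: "y \<in> S" for y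
  proof -
    define z where "z = inv d \<otimes> y \<otimes> d"
    have z: "z \<in> S" "z \<in> carrier G" using stable_inv y S unfolding z_def by auto
    have yc: "y \<in> carrier G" using y S by auto
    have "y = d \<otimes> z \<otimes> inv d" using d yc unfolding z_def by (simp add: m_assoc)
    also have "\<dots> = c \<otimes> z \<otimes> inv c" using agree[OF z(1)] by (rule sym)
    finally have "inv c \<otimes> y \<otimes> c = z" using c z(2) by (simp add: m_assoc)
    then show ?thesis using c d unfolding z_def by (simp only: inv_inv)
  qed
  have "\<And>y. y \<in> S \<Longrightarrow> inv d \<otimes> y \<otimes> inv (inv d) \<in> S" using stable_inv d by simp
  moreover obtain m :: nat where "n = - int m" using False by (intro that[of "nat (- n)"]) simp
  ultimately show ?thesis
    using conj_nat_pow_eq[OF S inv_closed[OF c] inv_closed[OF d] agree_inv _ x, of m] c d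
    by (simp add: int_pow_neg_int nat_pow_inv)
qed

lemma (in group) mem_conj_subgroup_iff:
  assumes H: "H \<subseteq> carrier G" and y: "y \<in> carrier G"
  shows "x \<in> conj_subgroup G H y \<longleftrightarrow> x \<in> carrier G \<and> y \<otimes> x \<otimes> inv y \<in> H"
proof
  assume "x \<in> conj_subgroup G H y"
  then obtain h where h: "h \<in> H" "x = inv y \<otimes> h \<otimes> y" unfolding conj_subgroup_def by blast
  then show "x \<in> carrier G \<and> y \<otimes> x \<otimes> inv y \<in> H" using H y by (auto simp: m_assoc)
next
  assume x: "x \<in> carrier G \<and> y \<otimes> x \<otimes> inv y \<in> H"
  then have "x = inv y \<otimes> (y \<otimes> x \<otimes> inv y) \<otimes> y" using y by (simp add: m_assoc)
  with x show "x \<in> conj_subgroup G H y" unfolding conj_subgroup_def by blast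
qed

lemma (in group) subgroup_conj_subgroup:
  assumes H: "subgroup H G" and y: "y \<in> carrier G"
  shows "subgroup (conj_subgroup G H y) G"
proof -
  note mem = mem_conj_subgroup_iff[OF subgroup.subset[OF H] y]
  show ?thesis
  proof (rule subgroupI)
    show "conj_subgroup G H y \<subseteq> carrier G" using mem by blast
    have "\<one> \<in> conj_subgroup G H y" using mem y subgroup.one_closed[OF H] by simp
    then show "conj_subgroup G H y \<noteq> {}" by blast
  next
    fix x assume "x \<in> conj_subgroup G H y"
    then have "x \<in> carrier G" "inv (y \<otimes> x \<otimes> inv y) \<in> H"
      using mem subgroup.m_inv_closed[OF H] by auto
    then show "inv x \<in> conj_subgroup G H y"
      using mem y by (simp add: inv_mult_group m_assoc)
  next
    fix x z assume "x \<in> conj_subgroup G H y" "z \<in> conj_subgroup G H y"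
    then have "x \<in> carrier G" "z \<in> carrier G" "(y \<otimes> x \<otimes> inv y) \<otimes> (y \<otimes> z \<otimes> inv y) \<in> H"
      using mem subgroup.m_closed[OF H] by auto
    then show "x \<otimes> z \<in> conj_subgroup G H y"
      using mem y by (simp add: m_assoc)
  qed
qed

lemma (in group_hom) subgroup_agree_modulo:
  assumes h': "h' \<in> hom G H" and N: "subgroup N H"
    and normalised: "\<And>y n. y \<in> carrier G \<Longrightarrow> n \<in> N \<Longrightarrow> h y \<otimes>\<^bsub>H\<^esub> n \<otimes>\<^bsub>H\<^esub> inv\<^bsub>H\<^esub> (h y) \<in> N"
  shows "subgroup {x \<in> carrier G. inv\<^bsub>H\<^esub> (h x) \<otimes>\<^bsub>H\<^esub> h' x \<in> N} G"
proof -
  interpret h': group_hom G H h' using h' by (simp add: group_hom_def group_hom_axioms_def)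
  show ?thesis
  proof (rule G.subgroupI)
    show "{x \<in> carrier G. inv\<^bsub>H\<^esub> (h x) \<otimes>\<^bsub>H\<^esub> h' x \<in> N} \<noteq> {}"
      using subgroup.one_closed[OF N] by auto
  next
    fix x assume "x \<in> {x \<in> carrier G. inv\<^bsub>H\<^esub> (h x) \<otimes>\<^bsub>H\<^esub> h' x \<in> N}"
    then have x: "x \<in> carrier G" and n: "inv\<^bsub>H\<^esub> (h x) \<otimes>\<^bsub>H\<^esub> h' x \<in> N" by auto
    have "h x \<otimes>\<^bsub>H\<^esub> inv\<^bsub>H\<^esub> (inv\<^bsub>H\<^esub> (h x) \<otimes>\<^bsub>H\<^esub> h' x) \<otimes>\<^bsub>H\<^esub> inv\<^bsub>H\<^esub> (h x) \<in> N"
      using normalised[OF x subgroup.m_inv_closed[OF N n]] .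
    then show "inv x \<in> {x \<in> carrier G. inv\<^bsub>H\<^esub> (h x) \<otimes>\<^bsub>H\<^esub> h' x \<in> N}"
      using x by (simp add: H.inv_mult_group H.m_assoc)
  next
    fix x z
    assume "x \<in> {x \<in> carrier G. inv\<^bsub>H\<^esub> (h x) \<otimes>\<^bsub>H\<^esub> h' x \<in> N}"
      and "z \<in> {x \<in> carrier G. inv\<^bsub>H\<^esub> (h x) \<otimes>\<^bsub>H\<^esub> h' x \<in> N}"
    then have x: "x \<in> carrier G" "inv\<^bsub>H\<^esub> (h x) \<otimes>\<^bsub>H\<^esub> h' x \<in> N"
      and z: "z \<in> carrier G" "inv\<^bsub>H\<^esub> (h z) \<otimes>\<^bsub>H\<^esub> h' z \<in> N" by auto
    have "h (inv z) \<otimes>\<^bsub>H\<^esub> (inv\<^bsub>H\<^esub> (h x) \<otimes>\<^bsub>H\<^esub> h' x) \<otimes>\<^bsub>H\<^esub> inv\<^bsub>H\<^esub> (h (inv z))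
          \<otimes>\<^bsub>H\<^esub> (inv\<^bsub>H\<^esub> (h z) \<otimes>\<^bsub>H\<^esub> h' z) \<in> N"
      using subgroup.m_closed[OF N normalised[OF G.inv_closed[OF z(1)] x(2)] z(2)] .
    then show "x \<otimes> z \<in> {x \<in> carrier G. inv\<^bsub>H\<^esub> (h x) \<otimes>\<^bsub>H\<^esub> h' x \<in> N}"
      using x z by (simp add: H.inv_mult_group H.m_assoc)
  qed auto
qed

locale degree_one_element =
  group F for F :: "('c, 'd) monoid_scheme" (structure) and dg :: "'c \<Rightarrow> int" and f1 +
  assumes dg_hom: "dg \<in> hom F integer_group"
    and f1_closed [simp]: "f1 \<in> carrier F"
    and dg_f1 [simp]: "dg f1 = 1"
begin

sublocale dg: group_hom F integer_group dg
  by (simp add: group_hom_def group_hom_axioms_def dg_hom is_group)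

abbreviation degree_zero :: "'c set"
  where "degree_zero \<equiv> {f \<in> carrier F. dg f = 0}"

lemma dg_mult [simp]: "x \<in> carrier F \<Longrightarrow> y \<in> carrier F \<Longrightarrow> dg (x \<otimes> y) = dg x + dg y"
  using dg.hom_mult by simp

lemma dg_inv [simp]: "x \<in> carrier F \<Longrightarrow> dg (inv x) = - dg x"
  using dg.hom_inv by simp

lemma dg_f1_pow [simp]: "dg (f1 [^] (n::int)) = n"
  using dg.hom_int_pow[OF f1_closed, of n] by simp

lemma conj_degree_zero:
  "f \<in> carrier F \<Longrightarrow> k \<in> degree_zero \<Longrightarrow> f \<otimes> k \<otimes> inv f \<in> degree_zero"
  by simp

lemma degree_zero_factor:
  "f \<in> carrier F \<Longrightarrow> f \<otimes> inv (f1 [^] dg f) \<in> degree_zero"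
  by simp

lemma subgroup_eq_carrier:
  assumes T: "subgroup T F" and K: "degree_zero \<subseteq> T" and "f1 \<in> T"
  shows "T = carrier F"
proof
  show "T \<subseteq> carrier F" using subgroup.subset[OF T] .
next
  show "carrier F \<subseteq> T"
  proof
    fix f assume f: "f \<in> carrier F"
    have "f \<otimes> inv (f1 [^] dg f) \<otimes> f1 [^] dg f \<in> T"
      using degree_zero_factor[OF f] K subgroup.m_closed[OF T] subgroup_int_pow_closed[OF T \<open>f1 \<in> T\<close>]
      by blast
    then show "f \<in> T" using f by (simp add: m_assoc)
  qed
qed

lemma hom_eqI:
  assumes "group G" and \<psi>1: "\<psi>1 \<in> hom F G" and \<psi>2: "\<psi>2 \<in> hom F G"
    and "\<And>f. f \<in> degree_zero \<Longrightarrow> \<psi>1 f = \<psi>2 f" and "\<psi>1 f1 = \<psi>2 f1"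
    and "f \<in> carrier F"
  shows "\<psi>1 f = \<psi>2 f"
proof -
  interpret \<psi>1: group_hom F G \<psi>1 using assms(1) \<psi>1 by (simp add: group_hom_def group_hom_axioms_def is_group)
  interpret \<psi>2: group_hom F G \<psi>2 using assms(1) \<psi>2 by (simp add: group_hom_def group_hom_axioms_def is_group)
  have "subgroup {f \<in> carrier F. \<psi>1 f = \<psi>2 f} F"
    by (rule subgroupI) auto
  then have "{f \<in> carrier F. \<psi>1 f = \<psi>2 f} = carrier F"
    by (rule subgroup_eq_carrier) (use assms(4,5) in auto)
  with assms(6) show ?thesis by blast
qed

definition twisted :: "('e, 'f) monoid_scheme \<Rightarrow> ('c \<Rightarrow> 'e) \<Rightarrow> 'e \<Rightarrow> ('c \<Rightarrow> 'e) \<Rightarrow> bool"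
  where "twisted G \<phi> g \<psi> \<longleftrightarrow> \<psi> \<in> hom F G \<and> (\<forall>f\<in>carrier F. dg f = 0 \<longrightarrow> \<psi> f = \<phi> f)
                                \<and> \<psi> f1 = \<phi> f1 \<otimes>\<^bsub>G\<^esub> g"

lemma twisted_unique:
  assumes "group G" "twisted G \<phi> g \<psi>1" "twisted G \<phi> g \<psi>2" "f \<in> carrier F"
  shows "\<psi>1 f = \<psi>2 f"
proof (rule hom_eqI[OF assms(1) _ _ _ _ assms(4)])
  show "\<psi>1 \<in> hom F G" "\<psi>2 \<in> hom F G" "\<psi>1 f1 = \<psi>2 f1"
    using assms(2,3) unfolding twisted_def by simp_all
  show "\<psi>1 k = \<psi>2 k" if "k \<in> degree_zero" for k
    using assms(2,3) that unfolding twisted_def by simp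
qed

lemma twisted_imp_centraliser:
  assumes G: "group G" and \<phi>: "\<phi> \<in> hom F G" and g: "g \<in> carrier G" and \<psi>: "twisted G \<phi> g \<psi>"
  shows "g \<in> centraliser G (\<phi> ` degree_zero)"
proof -
  interpret G: group G by fact
  interpret \<phi>: group_hom F G \<phi> using G \<phi> by (simp add: group_hom_def group_hom_axioms_def is_group)
  interpret \<psi>: group_hom F G \<psi> using G \<psi> by (simp add: group_hom_def group_hom_axioms_def is_group twisted_def)
  have "g \<otimes>\<^bsub>G\<^esub> \<phi> k = \<phi> k \<otimes>\<^bsub>G\<^esub> g" if k: "k \<in> degree_zero" for k
  proof -
    have b: "\<phi> f1 \<in> carrier G" and x: "\<phi> k \<in> carrier G" using k by auto
    have "\<psi> k = \<phi> k" and "\<psi> f1 = \<phi> f1 \<otimes>\<^bsub>G\<^esub> g"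
      using \<psi> k unfolding twisted_def by auto
    then have "(\<phi> f1 \<otimes>\<^bsub>G\<^esub> g) \<otimes>\<^bsub>G\<^esub> \<phi> k \<otimes>\<^bsub>G\<^esub> inv\<^bsub>G\<^esub> (\<phi> f1 \<otimes>\<^bsub>G\<^esub> g) = \<psi> (f1 \<otimes> k \<otimes> inv f1)"
      using k by simp
    also have "\<dots> = \<phi> (f1 \<otimes> k \<otimes> inv f1)"
      using \<psi> conj_degree_zero[OF f1_closed k] unfolding twisted_def by blast
    also have "\<dots> = \<phi> f1 \<otimes>\<^bsub>G\<^esub> \<phi> k \<otimes>\<^bsub>G\<^esub> inv\<^bsub>G\<^esub> (\<phi> f1)"
      using k by simp
    finally show ?thesis
      using G.conj_mult_eq_conj_iff_commute[OF b g x] by blast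
  qed
  with g show ?thesis unfolding centraliser_def by blast
qed

lemma conj_twist_int_pow:
  assumes G: "group G" and \<phi>: "\<phi> \<in> hom F G" and g: "g \<in> carrier G"
    and cent: "g \<in> centraliser G (\<phi> ` degree_zero)" and k: "k \<in> degree_zero"
  shows "(\<phi> f1 \<otimes>\<^bsub>G\<^esub> g) [^]\<^bsub>G\<^esub> (n::int) \<otimes>\<^bsub>G\<^esub> \<phi> k \<otimes>\<^bsub>G\<^esub> inv\<^bsub>G\<^esub> ((\<phi> f1 \<otimes>\<^bsub>G\<^esub> g) [^]\<^bsub>G\<^esub> n)
         = \<phi> (f1 [^] n \<otimes> k \<otimes> inv (f1 [^] n))"
proof -
  interpret G: group G by fact
  interpret \<phi>: group_hom F G \<phi> using G \<phi> by (simp add: group_hom_def group_hom_axioms_def is_group)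
  define b where "b = \<phi> f1"
  have b: "b \<in> carrier G" by (simp add: b_def)
  have S: "\<phi> ` degree_zero \<subseteq> carrier G" by auto
  have agree: "(b \<otimes>\<^bsub>G\<^esub> g) \<otimes>\<^bsub>G\<^esub> x \<otimes>\<^bsub>G\<^esub> inv\<^bsub>G\<^esub> (b \<otimes>\<^bsub>G\<^esub> g) = b \<otimes>\<^bsub>G\<^esub> x \<otimes>\<^bsub>G\<^esub> inv\<^bsub>G\<^esub> b"
    if x: "x \<in> \<phi> ` degree_zero" for x
  proof -
    have xc: "x \<in> carrier G" using x S by blast
    have "g \<otimes>\<^bsub>G\<^esub> x = x \<otimes>\<^bsub>G\<^esub> g" using cent x unfolding centraliser_def by blast
    then show ?thesis by (rule G.conj_mult_eq_conj_iff_commute[OF b g xc, THEN iffD2])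
  qed
  have stable: "\<phi> f \<otimes>\<^bsub>G\<^esub> x \<otimes>\<^bsub>G\<^esub> inv\<^bsub>G\<^esub> (\<phi> f) \<in> \<phi> ` degree_zero"
    if f: "f \<in> carrier F" and x: "x \<in> \<phi> ` degree_zero" for f x
  proof -
    obtain k where k: "k \<in> degree_zero" and "x = \<phi> k" using x by blast
    then have "\<phi> f \<otimes>\<^bsub>G\<^esub> x \<otimes>\<^bsub>G\<^esub> inv\<^bsub>G\<^esub> (\<phi> f) = \<phi> (f \<otimes> k \<otimes> inv f)" using f by simp
    then show ?thesis using conj_degree_zero[OF f k] by (metis imageI)
  qed
  have "(b \<otimes>\<^bsub>G\<^esub> g) [^]\<^bsub>G\<^esub> n \<otimes>\<^bsub>G\<^esub> \<phi> k \<otimes>\<^bsub>G\<^esub> inv\<^bsub>G\<^esub> ((b \<otimes>\<^bsub>G\<^esub> g) [^]\<^bsub>G\<^esub> n)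
        = b [^]\<^bsub>G\<^esub> n \<otimes>\<^bsub>G\<^esub> \<phi> k \<otimes>\<^bsub>G\<^esub> inv\<^bsub>G\<^esub> (b [^]\<^bsub>G\<^esub> n)"
  proof (rule G.conj_int_pow_eq[OF S _ b agree])
    show "b \<otimes>\<^bsub>G\<^esub> x \<otimes>\<^bsub>G\<^esub> inv\<^bsub>G\<^esub> b \<in> \<phi> ` degree_zero" if "x \<in> \<phi> ` degree_zero" for x
      using stable[OF f1_closed that] unfolding b_def .
    show "inv\<^bsub>G\<^esub> b \<otimes>\<^bsub>G\<^esub> x \<otimes>\<^bsub>G\<^esub> b \<in> \<phi> ` degree_zero" if "x \<in> \<phi> ` degree_zero" for x
      using stable[OF inv_closed[OF f1_closed] that] unfolding b_def by simp
    show "b \<otimes>\<^bsub>G\<^esub> g \<in> carrier G" "\<phi> k \<in> \<phi> ` degree_zero" using b g k by auto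
  qed
  also have "\<dots> = \<phi> (f1 [^] n \<otimes> k \<otimes> inv (f1 [^] n))"
    using k by (simp add: b_def \<phi>.hom_int_pow)
  finally show ?thesis unfolding b_def .
qed

lemma twisted_exists:
  assumes G: "group G" and \<phi>: "\<phi> \<in> hom F G" and g: "g \<in> carrier G"
    and cent: "g \<in> centraliser G (\<phi> ` degree_zero)"
  shows "\<exists>\<psi>. twisted G \<phi> g \<psi>"
proof -
  interpret G: group G by fact
  interpret \<phi>: group_hom F G \<phi> using G \<phi> by (simp add: group_hom_def group_hom_axioms_def is_group)
  define a where "a = \<phi> f1 \<otimes>\<^bsub>G\<^esub> g"
  have a: "a \<in> carrier G" using g by (simp add: a_def)
  \<comment> \<open>writing \<open>f = k f1\<^sup>n\<close> with \<open>k\<close> of degree zero, \<open>\<psi>\<close> sends \<open>f\<close> to \<open>\<phi> k a\<^sup>n\<close>\<close>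
  define \<psi> where "\<psi> f = \<phi> (f \<otimes> inv (f1 [^] dg f)) \<otimes>\<^bsub>G\<^esub> a [^]\<^bsub>G\<^esub> dg f" for f
  have "\<psi> (x \<otimes> y) = \<psi> x \<otimes>\<^bsub>G\<^esub> \<psi> y" if x: "x \<in> carrier F" and y: "y \<in> carrier F" for x y
  proof -
    define n where "n = dg x"
    define m where "m = dg y"
    define k where "k = x \<otimes> inv (f1 [^] n)"
    define k' where "k' = y \<otimes> inv (f1 [^] m)"
    have k: "k \<in> carrier F" and k': "k' \<in> degree_zero"
      using x y degree_zero_factor[OF y] by (simp_all add: k_def k'_def m_def)
    have "x \<otimes> y \<otimes> inv (f1 [^] (n + m)) = k \<otimes> (f1 [^] n \<otimes> k' \<otimes> inv (f1 [^] n))"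
      using x y by (simp add: k_def k'_def int_pow_mult inv_mult_group m_assoc)
    then have "\<psi> (x \<otimes> y) = \<phi> k \<otimes>\<^bsub>G\<^esub> \<phi> (f1 [^] n \<otimes> k' \<otimes> inv (f1 [^] n)) \<otimes>\<^bsub>G\<^esub> a [^]\<^bsub>G\<^esub> (n + m)"
      using x y k k' by (simp add: \<psi>_def n_def m_def)
    also have "\<dots> = \<phi> k \<otimes>\<^bsub>G\<^esub> (a [^]\<^bsub>G\<^esub> n \<otimes>\<^bsub>G\<^esub> \<phi> k' \<otimes>\<^bsub>G\<^esub> inv\<^bsub>G\<^esub> (a [^]\<^bsub>G\<^esub> n)) \<otimes>\<^bsub>G\<^esub> a [^]\<^bsub>G\<^esub> (n + m)"
      using conj_twist_int_pow[OF G \<phi> g cent k', of n] by (simp add: a_def)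
    also have "\<dots> = \<phi> k \<otimes>\<^bsub>G\<^esub> a [^]\<^bsub>G\<^esub> n \<otimes>\<^bsub>G\<^esub> (\<phi> k' \<otimes>\<^bsub>G\<^esub> a [^]\<^bsub>G\<^esub> m)"
      using k k' a by (simp add: G.int_pow_mult G.m_assoc)
    also have "\<dots> = \<psi> x \<otimes>\<^bsub>G\<^esub> \<psi> y"
      by (simp add: \<psi>_def k_def k'_def n_def m_def)
    finally show ?thesis .
  qed
  then have "\<psi> \<in> hom F G"
    using a by (intro homI) (simp_all add: \<psi>_def)
  moreover have "\<psi> f1 = \<phi> f1 \<otimes>\<^bsub>G\<^esub> g" and "\<forall>f\<in>carrier F. dg f = 0 \<longrightarrow> \<psi> f = \<phi> f"
    using a by (simp_all add: \<psi>_def a_def)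
  ultimately show ?thesis unfolding twisted_def by blast
qed

lemma twisted_inv_mult_mem_core:
  assumes G: "group G" and \<phi>: "\<phi> \<in> hom F G" and g: "g \<in> carrier G" and \<psi>: "twisted G \<phi> g \<psi>"
    and H: "subgroup H G" and core: "g \<in> (\<Inter>f\<in>carrier F. conj_subgroup G H (\<phi> f))"
    and f: "f \<in> carrier F"
  shows "inv\<^bsub>G\<^esub> (\<phi> f) \<otimes>\<^bsub>G\<^esub> \<psi> f \<in> (\<Inter>f\<in>carrier F. conj_subgroup G H (\<phi> f))"
proof -
  interpret G: group G by fact
  interpret \<phi>: group_hom F G \<phi> using G \<phi> by (simp add: group_hom_def group_hom_axioms_def is_group)
  define N where "N = (\<Inter>f\<in>carrier F. conj_subgroup G H (\<phi> f))"
  have mem_N: "n \<in> N \<longleftrightarrow> n \<in> carrier G \<and> (\<forall>y\<in>carrier F. \<phi> y \<otimes>\<^bsub>G\<^esub> n \<otimes>\<^bsub>G\<^esub> inv\<^bsub>G\<^esub> (\<phi> y) \<in> H)" for n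
    using G.mem_conj_subgroup_iff[OF subgroup.subset[OF H]] unfolding N_def by auto
  have N: "subgroup N G"
    unfolding N_def using H by (intro G.subgroups_Inter) (auto intro: G.subgroup_conj_subgroup)
  \<comment> \<open>\<open>N\<close> is normalised by \<open>\<phi> F\<close> because \<open>\<phi> y (\<phi> z n \<phi> z\<inverse>) \<phi> y\<inverse> = \<phi> (y z) n \<phi> (y z)\<inverse>\<close>\<close>
  have "\<phi> z \<otimes>\<^bsub>G\<^esub> n \<otimes>\<^bsub>G\<^esub> inv\<^bsub>G\<^esub> (\<phi> z) \<in> N" if z: "z \<in> carrier F" and n: "n \<in> N" for z n
  proof -
    have "\<phi> (y \<otimes> z) \<otimes>\<^bsub>G\<^esub> n \<otimes>\<^bsub>G\<^esub> inv\<^bsub>G\<^esub> (\<phi> (y \<otimes> z)) \<in> H" if "y \<in> carrier F" for y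
      using n that z mem_N by blast
    then show ?thesis using z n mem_N by (simp add: G.m_assoc G.inv_mult_group)
  qed
  with \<psi> N have "subgroup {x \<in> carrier F. inv\<^bsub>G\<^esub> (\<phi> x) \<otimes>\<^bsub>G\<^esub> \<psi> x \<in> N} F"
    unfolding twisted_def by (intro \<phi>.subgroup_agree_modulo) auto
  moreover have "degree_zero \<subseteq> {x \<in> carrier F. inv\<^bsub>G\<^esub> (\<phi> x) \<otimes>\<^bsub>G\<^esub> \<psi> x \<in> N}"
    using \<psi> subgroup.one_closed[OF N] unfolding twisted_def by auto
  moreover have "f1 \<in> {x \<in> carrier F. inv\<^bsub>G\<^esub> (\<phi> x) \<otimes>\<^bsub>G\<^esub> \<psi> x \<in> N}"
    using \<psi> g core unfolding twisted_def N_def by (simp add: G.m_assoc [symmetric])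
  ultimately show ?thesis
    using subgroup_eq_carrier f unfolding N_def by blast
qed

lemma twisted_l_coset_eq:
  assumes G: "group G" and \<phi>: "\<phi> \<in> hom F G" and g: "g \<in> carrier G" and \<psi>: "twisted G \<phi> g \<psi>"
    and H: "subgroup H G" and core: "g \<in> (\<Inter>f\<in>carrier F. conj_subgroup G H (\<phi> f))"
    and f: "f \<in> carrier F"
  shows "\<psi> f <#\<^bsub>G\<^esub> H = \<phi> f <#\<^bsub>G\<^esub> H"
proof -
  interpret G: group G by fact
  interpret \<phi>: group_hom F G \<phi> using G \<phi> by (simp add: group_hom_def group_hom_axioms_def is_group)
  have \<psi>f: "\<psi> f \<in> carrier G" using \<psi> f unfolding twisted_def by (blast intro: hom_in_carrier)
  have "inv\<^bsub>G\<^esub> (\<phi> f) \<otimes>\<^bsub>G\<^esub> \<psi> f \<in> conj_subgroup G H (\<phi> \<one>)"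
    using twisted_inv_mult_mem_core[OF assms] by blast
  then have c: "inv\<^bsub>G\<^esub> (\<phi> f) \<otimes>\<^bsub>G\<^esub> \<psi> f \<in> H"
    using G.mem_conj_subgroup_iff[OF subgroup.subset[OF H]] f \<psi>f by simp
  have "\<psi> f <#\<^bsub>G\<^esub> H = \<phi> f <#\<^bsub>G\<^esub> ((inv\<^bsub>G\<^esub> (\<phi> f) \<otimes>\<^bsub>G\<^esub> \<psi> f) <#\<^bsub>G\<^esub> H)"
    using f \<psi>f subgroup.subset[OF H] by (simp add: G.lcos_m_assoc)
  also have "\<dots> = \<phi> f <#\<^bsub>G\<^esub> H"
    using G.coset_join3[OF _ H c] \<psi>f f by simp
  finally show ?thesis .
qed

end

theorem lemma0:
  fixes F :: "('c, 'd) monoid_scheme" and G :: "('a, 'b) monoid_scheme"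
    and dg :: "'c \<Rightarrow> int" and \<phi> :: "'c \<Rightarrow> 'a"
  assumes "indexed_group F dg"
    and "group G"
    and "\<phi> \<in> hom F G"
    and "f1 \<in> carrier F" and "dg f1 = 1"
    and "g \<in> carrier G"
  shows "((\<exists>\<psi> \<in> hom F G. (\<forall>f\<in>carrier F. dg f = 0 \<longrightarrow> \<psi> f = \<phi> f)
                          \<and> \<psi> f1 = \<phi> f1 \<otimes>\<^bsub>G\<^esub> g)
          \<longleftrightarrow> g \<in> centraliser G (\<phi> ` {f \<in> carrier F. dg f = 0}))
       \<and> (\<forall>\<psi>1 \<in> hom F G. \<forall>\<psi>2 \<in> hom F G.
            (\<forall>f\<in>carrier F. dg f = 0 \<longrightarrow> \<psi>1 f = \<phi> f) \<and> \<psi>1 f1 = \<phi> f1 \<otimes>\<^bsub>G\<^esub> g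
          \<and> (\<forall>f\<in>carrier F. dg f = 0 \<longrightarrow> \<psi>2 f = \<phi> f) \<and> \<psi>2 f1 = \<phi> f1 \<otimes>\<^bsub>G\<^esub> g
          \<longrightarrow> (\<forall>f\<in>carrier F. \<psi>1 f = \<psi>2 f))
       \<and> (\<forall>H. subgroup H G \<and> g \<in> phi_core F dg G \<phi> H \<longrightarrow>
            (\<exists>\<psi> \<in> hom F G. (\<forall>f\<in>carrier F. dg f = 0 \<longrightarrow> \<psi> f = \<phi> f)
                          \<and> \<psi> f1 = \<phi> f1 \<otimes>\<^bsub>G\<^esub> g
                          \<and> (\<forall>f\<in>carrier F. \<psi> f <#\<^bsub>G\<^esub> H = \<phi> f <#\<^bsub>G\<^esub> H)))"
proof -
  interpret degree_one_element F dg f1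
    using assms(1,4,5) unfolding indexed_group_def degree_one_element_def degree_one_element_axioms_def
    by blast
  note G = assms(2) and \<phi> = assms(3) and g = assms(6)
  have existence: "(\<exists>\<psi>. twisted G \<phi> g \<psi>) \<longleftrightarrow> g \<in> centraliser G (\<phi> ` degree_zero)"
    using twisted_exists[OF G \<phi> g] twisted_imp_centraliser[OF G \<phi> g] by blast
  have cosets: "\<exists>\<psi>. twisted G \<phi> g \<psi> \<and> (\<forall>f\<in>carrier F. \<psi> f <#\<^bsub>G\<^esub> H = \<phi> f <#\<^bsub>G\<^esub> H)"
    if H: "subgroup H G" and core: "g \<in> phi_core F dg G \<phi> H" for H
  proof -
    have "{\<phi> f | f. f \<in> carrier F \<and> dg f = 0} = \<phi> ` degree_zero" by blast
    then have "g \<in> centraliser G (\<phi> ` degree_zero)"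
      and "g \<in> (\<Inter>f\<in>carrier F. conj_subgroup G H (\<phi> f))"
      using core unfolding phi_core_def by auto
    then show ?thesis
      using twisted_exists[OF G \<phi> g] twisted_l_coset_eq[OF G \<phi> g _ H] by blast
  qed
  show ?thesis
    using existence twisted_unique[OF G] cosets unfolding twisted_def Bex_def
    by (intro conjI) (assumption | blast)+
qed

end
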